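(* Let $\Gamma$ be a cocompact torsion-free Fuchsian group and $\mathcal{I}=\{I_\lambda\}_{\lambda\in\Lambda\setminus\{0\}}$ as in the context. Then: (a) every point $x\in\mathbb{S}^1$ is the limit point of an infinite nested sequence of intervals in $\mathcal{I}$ (i.e. there are intervals $I_{\lambda^1}\supset I_{\lambda^2}\supset\cdots$ in $\mathcal{I}$ with $\bigcap_k I_{\lambda^k}=\{x\}$); (b) given an interval $J\subset\mathbb{S}^1$ and $\epsilon>0$, there exists a finite covering of $J$ by intervals in $\mathcal{I}$ of length at most $\epsilon$.
   Context: $\mathbb{D}^2$ is the open unit disk with the Poincaré metric $d$, with boundary circle $\mathbb{S}^1$; lengths $|I|$ of intervals (arcs) $I\subset\mathbb{S}^1$ are taken with respect to the standard Euclidean (arc-length) measure. $\Lambda=\{\gamma(0):\gamma\in\Gamma\}$. For $\lambda\in\Lambda\setminus\{0\}$, $L_\lambda=\{z\in\mathbb{D}^2: d(z,0)=d(z,\lambda)\}$ is a geodesic, and $I_\lambda\subset\mathbb{S}^1$ is the shortest closed arc whose endpoints are the two endpoints of $L_\lambda$ on $\mathbb{S}^1$. *)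

theory Defs
  imports "HOL-Analysis.Analysis"
begin

(* Orientation-preserving isometries of the Poincare disk, parametrised by
   (u, a) with |u| = 1, |a| < 1:   z \<mapsto> u (z - a) / (1 - cnj a z).
   This parametrisation is a homeomorphism onto Aut(D) = PSU(1,1). *)
definition moeb :: "complex \<times> complex \<Rightarrow> complex \<Rightarrow> complex" where
  "moeb p z = fst p * (z - snd p) / (1 - cnj (snd p) * z)"

definition disk :: "complex set" where
  "disk = ball 0 1"

definition valid_param :: "complex \<times> complex \<Rightarrow> bool" where
  "valid_param p \<longleftrightarrow> cmod (fst p) = 1 \<and> cmod (snd p) < 1"

definition disk_subgroup :: "(complex \<times> complex) set \<Rightarrow> bool" where
  "disk_subgroup G \<longleftrightarrow>
     (\<forall>p\<in>G. valid_param p) \<and> (1, 0) \<in> G \<and>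
     (\<forall>p\<in>G. \<forall>q\<in>G. \<exists>r\<in>G. \<forall>z\<in>disk. moeb r z = moeb p (moeb q z)) \<and>
     (\<forall>p\<in>G. \<exists>q\<in>G. \<forall>z\<in>disk. moeb q (moeb p z) = z)"

definition fuchsian :: "(complex \<times> complex) set \<Rightarrow> bool" where
  "fuchsian G \<longleftrightarrow> disk_subgroup G \<and>
     (\<exists>e>0. \<forall>p\<in>G. p \<noteq> (1, 0) \<longrightarrow> dist p (1, 0) \<ge> e)"

definition cocompact :: "(complex \<times> complex) set \<Rightarrow> bool" where
  "cocompact G \<longleftrightarrow> (\<exists>K. compact K \<and> K \<subseteq> disk \<and> disk \<subseteq> (\<Union>p\<in>G. moeb p ` K))"

definition torsion_free :: "(complex \<times> complex) set \<Rightarrow> bool" where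
  "torsion_free G \<longleftrightarrow>
     (\<forall>p\<in>G. \<forall>n::nat. n > 0 \<and> (\<forall>z\<in>disk. (moeb p ^^ n) z = z) \<longrightarrow> p = (1, 0))"

definition pdist :: "complex \<Rightarrow> complex \<Rightarrow> real" where
  "pdist z w = 2 * artanh (cmod (z - w) / cmod (1 - cnj z * w))"

definition orbit0 :: "(complex \<times> complex) set \<Rightarrow> complex set" where
  "orbit0 G = (\<lambda>p. moeb p 0) ` G"

definition bisector :: "complex \<Rightarrow> complex set" where
  "bisector l = {z \<in> disk. pdist z 0 = pdist z l}"

definition bisector_ends :: "complex \<Rightarrow> complex set" where
  "bisector_ends l = closure (bisector l) \<inter> sphere 0 1"

definition Iarc :: "complex \<Rightarrow> complex set" where
  "Iarc l = (THE I. \<exists>\<alpha> \<beta>. \<alpha> \<le> \<beta> \<and> \<beta> - \<alpha> < pi \<and> {cis \<alpha>, cis \<beta>} = bisector_ends l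
                          \<and> I = cis ` {\<alpha>..\<beta>})"

definition arc_len :: "complex set \<Rightarrow> real" where
  "arc_len S = measure lborel {t \<in> {0..<2*pi}. cis t \<in> S}"

definition circle_interval :: "complex set \<Rightarrow> bool" where
  "circle_interval J \<longleftrightarrow> (\<exists>S::real set. is_interval S \<and> J = cis ` S)"

end

theory Submission
  imports Defs
begin

text \<open>
  Cocompactness means that every point of the disk lies within a bounded hyperbolic distance of
  the orbit \<open>\<Gamma>\<cdot>0\<close>. Pushing a point \<open>t x\<close> towards a boundary point \<open>x\<close> therefore produces orbit
  points \<open>\<lambda>\<close> with \<open>|\<lambda>| \<rightarrow> 1\<close> that stay within bounded hyperbolic distance of the radius towards
  \<open>x\<close>; a Euclidean estimate shows that \<open>x\<close> lies in the interior of \<open>I\<^sub>\<lambda>\<close> for such \<open>\<lambda>\<close>. Writing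
  \<open>r = |\<lambda>|\<close>, the arc \<open>I\<^sub>\<lambda>\<close> is the cap \<open>{y \<in> \<bbbS>\<^sup>1. Re (y \<lambda>\<^sup>*) \<ge> r\<^sup>2}\<close> of angular width
  \<open>2 arccos r\<close>, contained in the disk of radius \<open>\<surd>(1 - r\<^sup>2)\<close> about \<open>\<lambda>\<close>. Hence the arcs
  containing \<open>x\<close> in their interior become arbitrarily short, which gives nested sequences shrinking
  to \<open>x\<close>, and by compactness of the circle finite covers by arcs of length at most \<open>\<epsilon>\<close>.
\<close>

lemma cmod_diff_power2: "(cmod (x - y))^2 = (cmod x)^2 - 2 * Re (x * cnj y) + (cmod y)^2"
proof -
  have "complex_of_real ((cmod (x - y))^2) = (x - y) * cnj (x - y)"
    by (simp only: complex_norm_square)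
  also have "\<dots> = x * cnj x - (x * cnj y + cnj (x * cnj y)) + y * cnj y"
    by (simp add: algebra_simps)
  also have "x * cnj y + cnj (x * cnj y) = complex_of_real (2 * Re (x * cnj y))"
    by (simp only: complex_add_cnj of_real_mult of_real_numeral)
  finally have "complex_of_real ((cmod (x - y))^2)
      = complex_of_real ((cmod x)^2 - 2 * Re (x * cnj y) + (cmod y)^2)"
    by (simp only: of_real_add of_real_diff complex_norm_square)
  then show ?thesis using of_real_eq_iff by blast
qed

lemma Re_mult_cnj_gt_iff:
  assumes "cmod x = 1"
  shows "Re (x * cnj l) > (cmod l)^2 \<longleftrightarrow> (cmod (x - l))^2 < 1 - (cmod l)^2"
proof -
  have "(cmod (x - l))^2 = 1 - 2 * Re (x * cnj l) + (cmod l)^2"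
    by (simp only: cmod_diff_power2 assms power_one)
  then show ?thesis by linarith
qed

lemma cmod_one_minus_cnj_mult_power2:
  "(cmod (1 - cnj z * w))^2 = (cmod (z - w))^2 + (1 - (cmod z)^2) * (1 - (cmod w)^2)"
proof -
  have "complex_of_real ((cmod (1 - cnj z * w))^2 - (cmod (z - w))^2)
     = (1 - cnj z * w) * cnj (1 - cnj z * w) - (z - w) * cnj (z - w)"
    by (simp only: of_real_diff complex_norm_square)
  also have "\<dots> = (1 - z * cnj z) * (1 - w * cnj w)" by (simp add: algebra_simps)
  also have "\<dots> = complex_of_real ((1 - (cmod z)^2) * (1 - (cmod w)^2))"
    by (simp only: of_real_mult of_real_diff of_real_1 complex_norm_square)
  finally have "(cmod (1 - cnj z * w))^2 - (cmod (z - w))^2 = (1 - (cmod z)^2) * (1 - (cmod w)^2)"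
    using of_real_eq_iff by blast
  then show ?thesis by simp
qed

lemma cnj_mult_neq_1: "cmod a < 1 \<Longrightarrow> cmod b < 1 \<Longrightarrow> cnj a * b \<noteq> 1"
proof
  assume "cmod a < 1" "cmod b < 1" "cnj a * b = 1"
  then have "cmod (cnj a * b) = 1" by simp
  moreover have "cmod (cnj a * b) < 1" using \<open>cmod a < 1\<close> \<open>cmod b < 1\<close>
    by (simp add: norm_mult) (metis mult_strict_mono' norm_ge_zero mult_1_left)
  ultimately show False by simp
qed

definition pseudo_hyperbolic_dist :: "complex \<Rightarrow> complex \<Rightarrow> real" where
  "pseudo_hyperbolic_dist z w = cmod (z - w) / cmod (1 - cnj z * w)"

lemma pdist_eq_artanh: "pdist z w = 2 * artanh (pseudo_hyperbolic_dist z w)"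
  by (simp add: pdist_def pseudo_hyperbolic_dist_def)

lemma pseudo_hyperbolic_dist_0_right [simp]: "pseudo_hyperbolic_dist z 0 = cmod z"
  by (simp add: pseudo_hyperbolic_dist_def)

lemma pseudo_hyperbolic_dist_less_1:
  assumes "cmod z < 1" "cmod w < 1"
  shows "pseudo_hyperbolic_dist z w < 1"
proof -
  have "0 < (1 - (cmod z)^2) * (1 - (cmod w)^2)"
    using assms by (simp add: abs_square_less_1)
  then have "(cmod (z - w))^2 < (cmod (1 - cnj z * w))^2"
    using cmod_one_minus_cnj_mult_power2[of z w] by linarith
  then have "cmod (z - w) < cmod (1 - cnj z * w)" by (rule power2_less_imp_less) simp
  then show ?thesis unfolding pseudo_hyperbolic_dist_def by (simp add: divide_less_eq)
qed

lemma moeb_diff: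
  assumes "cnj c * a \<noteq> 1" "cnj c * b \<noteq> 1"
  shows "moeb (u, c) a - moeb (u, c) b
    = u * (1 - c * cnj c) * (a - b) / ((1 - cnj c * a) * (1 - cnj c * b))"
  using assms unfolding moeb_def by (simp add: field_simps)

lemma one_minus_cnj_moeb_mult_moeb:
  assumes "cnj c * a \<noteq> 1" "cnj c * b \<noteq> 1" "u * cnj u = 1"
  shows "1 - cnj (moeb (u, c) a) * moeb (u, c) b
    = (1 - c * cnj c) * (1 - cnj a * b) / ((1 - c * cnj a) * (1 - cnj c * b))"
proof -
  have "c * cnj a \<noteq> 1"
    using assms(1) by (metis complex_cnj_cnj complex_cnj_mult complex_cnj_one mult.commute)
  then have den: "(1 - c * cnj a) * (1 - cnj c * b) \<noteq> 0" using assms(2) by simp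
  have "cnj (moeb (u, c) a) * moeb (u, c) b
      = (cnj u * u) * ((cnj a - cnj c) * (b - c)) / ((1 - c * cnj a) * (1 - cnj c * b))"
    unfolding moeb_def by (simp add: mult.commute mult.left_commute)
  also have "cnj u * u = 1" using assms(3) by (simp add: mult.commute)
  finally have "1 - cnj (moeb (u, c) a) * moeb (u, c) b
      = ((1 - c * cnj a) * (1 - cnj c * b) - (cnj a - cnj c) * (b - c))
        / ((1 - c * cnj a) * (1 - cnj c * b))"
    using den by (simp add: diff_divide_distrib)
  also have "(1 - c * cnj a) * (1 - cnj c * b) - (cnj a - cnj c) * (b - c)
      = (1 - c * cnj c) * (1 - cnj a * b)"
    by (simp add: algebra_simps)
  finally show ?thesis .
qed

lemma pseudo_hyperbolic_dist_moeb:
  assumes p: "valid_param p" and a: "cmod a < 1" and b: "cmod b < 1"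
  shows "pseudo_hyperbolic_dist (moeb p a) (moeb p b) = pseudo_hyperbolic_dist a b"
proof -
  obtain u c where p_eq: "p = (u, c)" by fastforce
  have u: "cmod u = 1" and c: "cmod c < 1" using p p_eq by (auto simp: valid_param_def)
  have uu: "u * cnj u = 1" using u complex_norm_square[of u] by simp
  have ca: "cnj c * a \<noteq> 1" and cb: "cnj c * b \<noteq> 1" using cnj_mult_neq_1 a b c by auto
  have n1: "cmod (1 - c * cnj a) = cmod (1 - cnj c * a)"
    by (metis complex_cnj_cnj complex_cnj_diff complex_cnj_mult complex_cnj_one complex_mod_cnj)
  have cc: "1 - c * cnj c = complex_of_real (1 - (cmod c)^2)"
    by (simp only: of_real_diff of_real_1 complex_norm_square)
  have pos: "1 - (cmod c)^2 > 0" using c by (simp add: abs_square_less_1)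
  have d: "cmod (1 - cnj c * a) > 0" "cmod (1 - cnj c * b) > 0" using ca cb by auto
  have "pseudo_hyperbolic_dist (moeb p a) (moeb p b)
     = ((1 - (cmod c)^2) * cmod (a - b) / (cmod (1 - cnj c * a) * cmod (1 - cnj c * b))) /
       ((1 - (cmod c)^2) * cmod (1 - cnj a * b) / (cmod (1 - cnj c * a) * cmod (1 - cnj c * b)))"
    unfolding pseudo_hyperbolic_dist_def p_eq moeb_diff[OF ca cb]
      one_minus_cnj_moeb_mult_moeb[OF ca cb uu]
    unfolding norm_mult norm_divide n1 u cc norm_of_real using pos by simp
  also have "\<dots> = pseudo_hyperbolic_dist a b"
    using pos d by (simp add: divide_simps pseudo_hyperbolic_dist_def)
  finally show ?thesis .
qed

lemma norm_moeb_0_less_1: "valid_param p \<Longrightarrow> cmod (moeb p 0) < 1"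
  by (cases p) (simp add: moeb_def valid_param_def norm_mult)

lemma orbit0_norm_less_1: "disk_subgroup G \<Longrightarrow> l \<in> orbit0 G \<Longrightarrow> cmod l < 1"
  unfolding orbit0_def disk_subgroup_def using norm_moeb_0_less_1 by auto

lemma norm_one_minus_cnj_mult_le:
  assumes z: "cmod z \<le> 1" and zl: "cnj z * l \<noteq> 1" and s: "pseudo_hyperbolic_dist z l \<le> s"
  shows "(1 - s) * cmod (1 - cnj z * l) \<le> 1 - (cmod z)^2"
proof -
  define A where "A = cmod (1 - cnj z * l)"
  have "A > 0" using zl by (simp add: A_def)
  then have zl_le: "cmod (z - l) \<le> s * A"
    using s by (simp add: pseudo_hyperbolic_dist_def A_def divide_le_eq)
  have "1 - cnj z * l = (1 - cnj z * z) + cnj z * (z - l)" by (simp add: algebra_simps)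
  then have "A \<le> cmod (1 - cnj z * z) + cmod (cnj z * (z - l))"
    unfolding A_def by (metis norm_triangle_ineq)
  also have "1 - cnj z * z = complex_of_real (1 - (cmod z)^2)"
    using complex_norm_square[of z] by (simp add: mult.commute)
  also have "cmod (complex_of_real (1 - (cmod z)^2)) = 1 - (cmod z)^2"
    unfolding norm_of_real using z by (simp add: abs_square_le_1)
  also have "cmod (cnj z * (z - l)) \<le> cmod (z - l)"
    using z by (simp add: norm_mult mult_left_le_one_le)
  finally show ?thesis using zl_le unfolding A_def by (simp add: algebra_simps)
qed

lemma norm_one_minus_cnj_mult_power2_le:
  assumes zl: "cnj z * l \<noteq> 1" and s: "pseudo_hyperbolic_dist z l \<le> s"
  shows "(1 - s^2) * (cmod (1 - cnj z * l))^2 \<le> (1 - (cmod z)^2) * (1 - (cmod l)^2)"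
proof -
  define A where "A = cmod (1 - cnj z * l)"
  have "A > 0" using zl by (simp add: A_def)
  then have "cmod (z - l) \<le> s * A"
    using s by (simp add: pseudo_hyperbolic_dist_def A_def divide_le_eq)
  then have "(cmod (z - l))^2 \<le> s^2 * A^2"
    using power_mono[of "cmod (z - l)" "s * A" 2] by (simp add: power_mult_distrib)
  then show ?thesis using cmod_one_minus_cnj_mult_power2[of z l]
    by (simp add: A_def algebra_simps)
qed

lemma norm_diff_le_radial:
  assumes x: "cmod x = 1" and t: "0 \<le> t" "t \<le> 1" and l: "cmod l \<le> 1"
  shows "cmod (x - l) \<le> 2 * cmod (1 - cnj (complex_of_real t * x) * l)"
proof -
  have "cnj x * x = 1" using x complex_norm_square[of x] by (simp add: mult.commute)
  then have "1 - cnj (complex_of_real t * x) * l = cnj x * (x - complex_of_real t * l)"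
    by (simp add: algebra_simps)
  then have A: "cmod (1 - cnj (complex_of_real t * x) * l) = cmod (x - complex_of_real t * l)"
    using x by (simp add: norm_mult)
  have tl: "cmod (complex_of_real t * l) \<le> t" using l t by (simp add: norm_mult mult_left_le)
  have "cmod (x - l) \<le> cmod (x - complex_of_real t * l) + cmod (complex_of_real t * l - l)"
    using norm_triangle_ineq[of "x - complex_of_real t * l" "complex_of_real t * l - l"] by simp
  also have "complex_of_real t * l - l = - (complex_of_real (1 - t) * l)"
    by (simp add: algebra_simps)
  also have "cmod (- (complex_of_real (1 - t) * l)) \<le> 1 - t"
    unfolding norm_minus_cancel norm_mult norm_of_real using l t by (simp add: mult_left_le)
  also have "1 - t \<le> cmod (x - complex_of_real t * l)"
    using x tl norm_triangle_ineq2[of x "complex_of_real t * l"] by simp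
  finally show ?thesis using A by simp
qed

lemma cocompact_orbit0_net:
  assumes sub: "disk_subgroup G" and cc: "cocompact G"
  obtains s where "0 \<le> s" "s < 1"
    "\<And>z. z \<in> disk \<Longrightarrow> \<exists>l\<in>orbit0 G. pseudo_hyperbolic_dist z l \<le> s"
proof -
  obtain K where K: "compact K" "K \<subseteq> disk" "disk \<subseteq> (\<Union>p\<in>G. moeb p ` K)"
    using cc unfolding cocompact_def by blast
  have "K \<noteq> {}" using K(3) unfolding disk_def by fastforce
  have "compact (norm ` K)" using K(1) by (intro compact_continuous_image continuous_intros)
  then obtain m where m: "m \<in> norm ` K" "\<forall>y\<in>norm ` K. y \<le> m"
    using compact_attains_sup \<open>K \<noteq> {}\<close> by blast
  have "m < 1" using m(1) K(2) unfolding disk_def by auto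
  have "\<exists>l\<in>orbit0 G. pseudo_hyperbolic_dist z l \<le> max 0 m" if z: "z \<in> disk" for z
  proof -
    obtain p k where p: "p \<in> G" and k: "k \<in> K" and z_eq: "z = moeb p k" using K(3) z by blast
    have vp: "valid_param p" using sub p by (simp add: disk_subgroup_def)
    have "cmod k < 1" using k K(2) by (auto simp: disk_def)
    then have "pseudo_hyperbolic_dist z (moeb p 0) = cmod k"
      using pseudo_hyperbolic_dist_moeb[OF vp, of k 0] z_eq by simp
    moreover have "moeb p 0 \<in> orbit0 G" using p by (simp add: orbit0_def)
    ultimately show ?thesis using m k by force
  qed
  then show ?thesis using that[of "max 0 m"] \<open>m < 1\<close> by auto
qed

lemma one_minus_norm_power2_le_of_pseudo_hyperbolic_dist:
  assumes z: "cmod z < 1" and l: "cmod l < 1"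
    and zl: "pseudo_hyperbolic_dist z l \<le> s" and s: "s < 1"
  shows "1 - (cmod l)^2 \<le> (1 - (cmod z)^2) / (1 - s)^2"
proof -
  define d where "d = 1 - (cmod z)^2"
  define A where "A = cmod (1 - cnj z * l)"
  have "d > 0" using z by (simp add: d_def abs_square_less_1)
  have "cnj z * l \<noteq> 1" using cnj_mult_neq_1[OF z l] .
  then have "A > 0" by (simp add: A_def)
  have A_upper: "(1 - s) * A \<le> d"
    using norm_one_minus_cnj_mult_le[OF _ \<open>cnj z * l \<noteq> 1\<close> zl] z by (simp add: A_def d_def)
  have "d * (1 - (cmod l)^2) \<le> A^2"
    using cmod_one_minus_cnj_mult_power2[of z l] by (simp add: A_def d_def)
  also have "A^2 \<le> (d / (1 - s))^2"
    using A_upper \<open>A > 0\<close> s by (intro power_mono) (simp_all add: field_simps)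
  finally have "d * (1 - (cmod l)^2) \<le> d * (d / (1 - s)^2)"
    by (simp add: power_divide power2_eq_square)
  then show ?thesis using \<open>d > 0\<close> mult_le_cancel_left_pos unfolding d_def by blast
qed

lemma Re_mult_cnj_gt_of_pseudo_hyperbolic_dist:
  assumes x: "cmod x = 1" and t: "0 \<le> t" "t < 1" and l: "cmod l < 1"
    and zl: "pseudo_hyperbolic_dist (complex_of_real t * x) l \<le> s"
    and small: "4 * (1 - t^2) < 1 - s^2"
  shows "Re (x * cnj l) > (cmod l)^2"
proof -
  define z where "z = complex_of_real t * x"
  define d where "d = 1 - t^2"
  define A where "A = cmod (1 - cnj z * l)"
  have "cmod z = t" using x t by (simp add: z_def norm_mult)
  then have "cnj z * l \<noteq> 1" using cnj_mult_neq_1 t l by simp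
  then have "A > 0" by (simp add: A_def)
  have "d > 0" using t by (simp add: d_def power_less_one_iff)
  have A_lower: "(1 - s^2) * A^2 \<le> d * (1 - (cmod l)^2)"
    using norm_one_minus_cnj_mult_power2_le[OF \<open>cnj z * l \<noteq> 1\<close>] zl \<open>cmod z = t\<close>
    by (simp add: A_def z_def d_def)
  have "cmod (x - l) \<le> 2 * A"
    using norm_diff_le_radial[OF x, of t l] t l by (simp add: A_def z_def)
  then have "(cmod (x - l))^2 \<le> 4 * A^2"
    using power_mono[of "cmod (x - l)" "2 * A" 2] by (simp add: power_mult_distrib)
  moreover have "d * (4 * A^2) < (1 - s^2) * A^2"
    using small \<open>A > 0\<close> by (simp add: d_def)
  then have "d * (4 * A^2) < d * (1 - (cmod l)^2)" using A_lower by linarith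
  then have "4 * A^2 < 1 - (cmod l)^2" using \<open>d > 0\<close> by simp
  ultimately show ?thesis using Re_mult_cnj_gt_iff[OF x] by simp
qed

lemma orbit0_near_boundary_point:
  assumes sub: "disk_subgroup G" and cc: "cocompact G" and x: "cmod x = 1" and \<eta>: "\<eta> > 0"
  obtains l where "l \<in> orbit0 G" "Re (x * cnj l) > (cmod l)^2" "1 - (cmod l)^2 < \<eta>"
proof -
  obtain s where s: "0 \<le> s" "s < 1"
    and net: "\<And>z. z \<in> disk \<Longrightarrow> \<exists>l\<in>orbit0 G. pseudo_hyperbolic_dist z l \<le> s"
    using cocompact_orbit0_net[OF sub cc] by blast
  define d where "d = min ((1 - s^2) / 8) (\<eta> * (1 - s)^2 / 2)"
  have "s^2 < 1" using s by (simp add: abs_square_less_1)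
  then have "0 < d" using \<eta> s by (simp add: d_def)
  moreover have "d \<le> (1 - s^2) / 8" unfolding d_def by (rule min.cobounded1)
  moreover have "d \<le> \<eta> * (1 - s)^2 / 2" unfolding d_def by (rule min.cobounded2)
  ultimately have d: "0 < d" "4 * d < 1 - s^2" "d < \<eta> * (1 - s)^2"
    by (auto simp: field_simps)
  have "0 \<le> s^2" by simp
  then have "d < 1" using d by linarith
  define t where "t = sqrt (1 - d)"
  have t: "0 \<le> t" "t < 1" "t^2 = 1 - d" using d \<open>d < 1\<close> by (auto simp: t_def)
  define z where "z = complex_of_real t * x"
  have "cmod z = t" using x t by (simp add: z_def norm_mult)
  then have z: "z \<in> disk" "1 - (cmod z)^2 = d" using t by (auto simp: disk_def)
  obtain l where l: "l \<in> orbit0 G" and zl: "pseudo_hyperbolic_dist z l \<le> s"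
    using net[OF z(1)] by blast
  have "cmod l < 1" using orbit0_norm_less_1[OF sub l] .
  have "1 - (cmod l)^2 \<le> d / (1 - s)^2"
    using one_minus_norm_power2_le_of_pseudo_hyperbolic_dist[OF _ \<open>cmod l < 1\<close> zl s(2)] z
    by (simp add: disk_def)
  also have "\<dots> < \<eta>" using d s by (simp add: divide_simps)
  finally have "1 - (cmod l)^2 < \<eta>" .
  moreover have "Re (x * cnj l) > (cmod l)^2"
    using Re_mult_cnj_gt_of_pseudo_hyperbolic_dist[OF x t(1,2) \<open>cmod l < 1\<close>] zl d(2) t(3)
    by (simp add: z_def)
  ultimately show ?thesis using that l by blast
qed

lemma artanh_real_inj:
  fixes x y :: real
  assumes "\<bar>x\<bar> < 1" "\<bar>y\<bar> < 1" "artanh x = artanh y"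
  shows "x = y"
proof -
  have "ln ((1 + x) / (1 - x)) = ln ((1 + y) / (1 - y))"
    using assms(3) by (simp add: artanh_def)
  then have "(1 + x) / (1 - x) = (1 + y) / (1 - y)"
    using assms by (subst (asm) ln_inj_iff) auto
  then have "(1 + x) * (1 - y) = (1 + y) * (1 - x)" using assms by (simp add: field_simps)
  then show ?thesis by (simp add: algebra_simps)
qed

lemma bisector_eq:
  assumes l: "cmod l < 1"
  shows "bisector l = {z. cmod z < 1 \<and> (cmod (z - l))^2 = (cmod z)^2 * (1 - (cmod l)^2)}"
proof -
  have "pdist z 0 = pdist z l \<longleftrightarrow> (cmod (z - l))^2 = (cmod z)^2 * (1 - (cmod l)^2)"
    if z: "cmod z < 1" for z
  proof -
    define A where "A = cmod (1 - cnj z * l)"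
    define N where "N = cmod (z - l)"
    have A2: "A^2 = N^2 + (1 - (cmod z)^2) * (1 - (cmod l)^2)"
      using cmod_one_minus_cnj_mult_power2[of z l] by (simp add: A_def N_def)
    have "1 - (cmod z)^2 > 0" using z by (simp add: abs_square_less_1)
    have "A > 0" using cnj_mult_neq_1[OF z l] by (simp add: A_def)
    have "N \<ge> 0" by (simp add: N_def)
    have "N / A < 1"
      using pseudo_hyperbolic_dist_less_1[OF z l] by (simp add: pseudo_hyperbolic_dist_def A_def N_def)
    then have "pdist z 0 = pdist z l \<longleftrightarrow> cmod z = N / A"
      using artanh_real_inj[of "cmod z" "N / A"] z \<open>A > 0\<close> \<open>N \<ge> 0\<close>
      by (auto simp: pdist_eq_artanh pseudo_hyperbolic_dist_def A_def N_def)
    also have "\<dots> \<longleftrightarrow> cmod z * A = N" using \<open>A > 0\<close> by (auto simp: field_simps)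
    also have "\<dots> \<longleftrightarrow> (cmod z)^2 * A^2 = N^2"
      using \<open>A > 0\<close> \<open>N \<ge> 0\<close> by (metis norm_ge_zero power2_eq_iff_nonneg power_mult_distrib
          zero_le_mult_iff less_imp_le)
    also have "\<dots> \<longleftrightarrow> (1 - (cmod z)^2) * (N^2 - (cmod z)^2 * (1 - (cmod l)^2)) = 0"
      unfolding A2 by (auto simp: algebra_simps)
    also have "\<dots> \<longleftrightarrow> N^2 = (cmod z)^2 * (1 - (cmod l)^2)"
      using \<open>1 - (cmod z)^2 > 0\<close> by simp
    finally show ?thesis by (simp add: N_def)
  qed
  then show ?thesis unfolding bisector_def disk_def by auto
qed

text \<open>For \<open>\<sigma> = \<plusminus>1\<close> these are the two endpoints \<open>cis (Arg l \<plusminus> arccos |l|)\<close> of the bisector.\<close>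
definition bisector_end :: "complex \<Rightarrow> real \<Rightarrow> complex" where
  "bisector_end l \<sigma> = (l / cmod l) * Complex (cmod l) (\<sigma> * sqrt (1 - (cmod l)^2))"

lemma norm_bisector_end:
  assumes "l \<noteq> 0" "cmod l < 1" "\<bar>\<sigma>\<bar> = 1"
  shows "cmod (bisector_end l \<sigma>) = 1"
proof -
  have "(sqrt (1 - (cmod l)^2))^2 = 1 - (cmod l)^2"
    using assms by (simp add: abs_square_le_1 less_imp_le)
  moreover have "\<sigma>^2 = 1" using assms(3) by (metis power2_abs power_one)
  ultimately have "(cmod (Complex (cmod l) (\<sigma> * sqrt (1 - (cmod l)^2))))^2 = 1"
    by (simp only: cmod_power2 complex.sel power_mult_distrib) simp
  then have "cmod (Complex (cmod l) (\<sigma> * sqrt (1 - (cmod l)^2))) = 1"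
    by (metis abs_norm_cancel power2_eq_1_iff real_sqrt_abs real_sqrt_one)
  then show ?thesis using assms by (simp add: bisector_end_def norm_mult norm_divide)
qed

text \<open>
  In the frame rotated by \<open>l / |l|\<close>, the points of the bisector with real part \<open>|l| - h\<close> are
  \<open>(|l| - h, \<plusminus>\<surd>(g h))\<close>; they tend to the two endpoints as \<open>h \<rightarrow> 0\<^sup>+\<close>.
\<close>
lemma bisector_end_in_closure:
  assumes l0: "l \<noteq> 0" and l1: "cmod l < 1" and \<sigma>: "\<bar>\<sigma>\<bar> = 1"
  shows "bisector_end l \<sigma> \<in> closure (bisector l)"
proof -
  define r where "r = cmod l"
  have r: "0 < r" "r < 1" using l0 l1 by (auto simp: r_def)
  define u where "u = l / complex_of_real r"
  have u1: "cmod u = 1" using r by (simp add: u_def norm_divide r_def)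
  have lu: "l = u * complex_of_real r" using r by (simp add: u_def)
  have \<sigma>2: "\<sigma>^2 = 1" using \<sigma> by (metis power2_abs power_one)
  define g where "g = (\<lambda>h::real. 2 * (r - h) / r - 1 - (r - h)^2)"
  define Z where "Z = (\<lambda>h. u * Complex (r - h) (\<sigma> * sqrt (g h)))"
  have g0: "g 0 = 1 - r^2" unfolding g_def using r by simp
  have "g 0 > 0" using r g0 by (simp add: abs_square_less_1)
  have g_lim: "(g \<longlongrightarrow> g 0) (at_right 0)" unfolding g_def using r by (intro tendsto_intros) auto
  have "eventually (\<lambda>h. g h > 0) (at_right 0)" using order_tendstoD(1)[OF g_lim \<open>g 0 > 0\<close>] .
  moreover have "eventually (\<lambda>h. h \<in> {0<..<r}) (at_right 0)"
    using eventually_at_right_real r by blast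
  ultimately have "eventually (\<lambda>h. Z h \<in> bisector l) (at_right 0)"
  proof eventually_elim
    case (elim h)
    have sq: "(sqrt (g h))^2 = g h" using elim by simp
    have "(cmod (Z h))^2 = (r - h)^2 + g h"
      unfolding Z_def by (simp add: norm_mult u1 cmod_power2 power_mult_distrib sq \<sigma>2)
    also have "\<dots> = 2 * (r - h) / r - 1" by (simp add: g_def)
    finally have nZ: "(cmod (Z h))^2 = 2 * (r - h) / r - 1" .
    have "2 * (r - h) / r - 1 < 1" using elim r by (simp add: field_simps)
    then have "cmod (Z h) < 1" using nZ by (metis abs_norm_cancel abs_square_less_1)
    have "Z h - l = u * Complex (- h) (\<sigma> * sqrt (g h))"
      unfolding Z_def lu by (simp add: complex_eq_iff algebra_simps)
    then have "(cmod (Z h - l))^2 = h^2 + g h"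
      by (simp add: norm_mult u1 cmod_power2 power_mult_distrib sq \<sigma>2)
    also have "\<dots> = (2 * (r - h) / r - 1) * (1 - r^2)"
      using r by (simp add: g_def field_simps power2_eq_square)
    finally show ?case using \<open>cmod (Z h) < 1\<close> nZ bisector_eq[OF l1] by (simp add: r_def)
  qed
  then have "eventually (\<lambda>h. Z h \<in> closure (bisector l)) (at_right 0)"
    by eventually_elim (use closure_subset in blast)
  moreover have "(Z \<longlongrightarrow> u * Complex (r - 0) (\<sigma> * sqrt (g 0))) (at_right 0)"
    unfolding Z_def by (intro tendsto_intros g_lim continuous_intros tendsto_Complex)
  ultimately show ?thesis
    using Lim_in_closed_set[OF closed_closure] trivial_limit_at_right_real
    by (fastforce simp: g0 u_def r_def bisector_end_def)
qed

lemma bisector_ends_eq: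
  assumes l0: "l \<noteq> 0" and l1: "cmod l < 1"
  shows "bisector_ends l = {bisector_end l 1, bisector_end l (-1)}"
proof
  show "{bisector_end l 1, bisector_end l (-1)} \<subseteq> bisector_ends l"
    unfolding bisector_ends_def
    using bisector_end_in_closure[OF l0 l1] norm_bisector_end[OF l0 l1] by simp
next
  define r where "r = cmod l"
  have r: "0 < r" "r < 1" using l0 l1 by (auto simp: r_def)
  define u where "u = l / complex_of_real r"
  have u1: "cmod u = 1" using r by (simp add: u_def norm_divide r_def)
  have uu: "u * cnj u = 1" using u1 complex_norm_square[of u] by simp
  define C where "C = {z. cmod z \<le> 1 \<and> (cmod (z - l))^2 = (cmod z)^2 * (1 - (cmod l)^2)}"
  have "closure (bisector l) \<subseteq> C"
  proof (rule closure_minimal)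
    show "bisector l \<subseteq> C" using bisector_eq[OF l1] by (auto simp: C_def)
    show "closed C" unfolding C_def
      by (intro closed_Collect_conj closed_Collect_le closed_Collect_eq continuous_intros)
  qed
  show "bisector_ends l \<subseteq> {bisector_end l 1, bisector_end l (-1)}"
  proof
    fix y assume "y \<in> bisector_ends l"
    then have y1: "cmod y = 1" and "(cmod (y - l))^2 = (cmod y)^2 * (1 - (cmod l)^2)"
      using \<open>closure (bisector l) \<subseteq> C\<close> unfolding bisector_ends_def C_def by auto
    then have Re1: "Re (y * cnj l) = r^2" using cmod_diff_power2[of y l] by (simp add: r_def)
    define w where "w = y * cnj u"
    have yw: "y = u * w" using uu by (simp add: w_def mult.commute mult.left_commute)
    have w1: "cmod w = 1" using y1 u1 by (simp add: w_def norm_mult)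
    have "y * cnj l = complex_of_real r * w" using r by (simp add: w_def u_def r_def)
    then have Rw: "Re w = r" using Re1 r by (simp add: power2_eq_square)
    have "(Im w)^2 = 1 - r^2" using w1 Rw cmod_power2[of w] by simp
    then have "\<bar>Im w\<bar> = sqrt (1 - r^2)" by (metis real_sqrt_abs)
    then have "w = Complex r (1 * sqrt (1 - r^2)) \<or> w = Complex r ((-1) * sqrt (1 - r^2))"
      using Rw by (auto simp: complex_eq_iff abs_if split: if_splits)
    then show "y \<in> {bisector_end l 1, bisector_end l (-1)}"
      unfolding yw bisector_end_def u_def r_def by auto
  qed
qed

lemma arccos_gt_0_less_pi_half: "0 < r \<Longrightarrow> r < 1 \<Longrightarrow> 0 < arccos r \<and> arccos r < pi / 2"
  using arccos_lt_bounded[of r] arccos_less_arccos[of 0 r] by simp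

lemma cis_Arg_plus_minus_arccos:
  assumes l0: "l \<noteq> 0" and l1: "cmod l < 1"
  shows "cis (Arg l + arccos (cmod l)) = bisector_end l 1"
    and "cis (Arg l - arccos (cmod l)) = bisector_end l (-1)"
proof -
  define r where "r = cmod l"
  have r: "0 < r" "r < 1" using l0 l1 by (auto simp: r_def)
  have cos: "cos (arccos r) = r" using r by simp
  have sin: "sin (arccos r) = sqrt (1 - r^2)" using r by (simp add: sin_arccos_abs)
  have cis_Arg: "cis (Arg l) = l / complex_of_real r"
    using cis_Arg[OF l0] by (simp add: Complex.sgn_eq r_def)
  have "cis (arccos r) = Complex r (1 * sqrt (1 - r^2))" by (simp add: complex_eq_iff cos sin)
  then show "cis (Arg l + arccos (cmod l)) = bisector_end l 1"
    unfolding bisector_end_def cis_mult[symmetric] cis_Arg r_def by simp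
  have "cis (- arccos r) = Complex r ((-1) * sqrt (1 - r^2))" by (simp add: complex_eq_iff cos sin)
  then show "cis (Arg l - arccos (cmod l)) = bisector_end l (-1)"
    unfolding bisector_end_def diff_conv_add_uminus cis_mult[symmetric] cis_Arg r_def by simp
qed

lemma cis_image_atLeastAtMost:
  assumes ab: "a \<le> b" "b - a < pi"
  shows "cis ` {a..b}
    = {y. cmod y = 1 \<and> Re (y * cnj (cis a + cis b)) \<ge> (cmod (cis a + cis b))^2 / 2}"
proof -
  define h where "h = (b - a) / 2"
  define c where "c = (a + b) / 2"
  have h: "0 \<le> h" "h < pi / 2" using ab by (auto simp: h_def)
  have "cos h > 0" using h by (intro cos_gt_zero_pi) auto
  have "cis a = cis c * cis (-h)" "cis b = cis c * cis h"
    by (simp_all add: cis_mult c_def h_def field_simps)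
  then have sum: "cis a + cis b = complex_of_real (2 * cos h) * cis c"
    by (simp add: complex_eq_iff cis.ctr algebra_simps)
  have "\<And>y. Re (y * cnj (cis a + cis b)) = 2 * cos h * Re (y * cis (- c))"
    by (simp add: sum cis_cnj algebra_simps)
  moreover have "cmod (cis a + cis b) = 2 * cos h" using \<open>cos h > 0\<close> by (simp add: sum norm_mult)
  moreover have "\<And>R. (2 * cos h)^2 / 2 \<le> 2 * cos h * R \<longleftrightarrow> cos h \<le> R"
    using \<open>cos h > 0\<close> by (simp add: power2_eq_square)
  ultimately have cap: "{y. cmod y = 1 \<and> Re (y * cnj (cis a + cis b)) \<ge> (cmod (cis a + cis b))^2 / 2}
      = {y. cmod y = 1 \<and> Re (y * cis (- c)) \<ge> cos h}"
    by simp
  show ?thesis unfolding cap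
  proof safe
    fix t assume t: "t \<in> {a..b}"
    show "cmod (cis t) = 1" by simp
    have "\<bar>t - c\<bar> \<le> h" using t unfolding c_def h_def by (auto simp: abs_if field_simps)
    then have "cos h \<le> cos \<bar>t - c\<bar>" using h by (intro cos_monotone_0_pi_le) auto
    also have "cos \<bar>t - c\<bar> = Re (cis t * cis (- c))" by (simp add: cis_mult)
    finally show "cos h \<le> Re (cis t * cis (- c))" .
  next
    fix y assume y: "cmod y = 1" "cos h \<le> Re (y * cis (- c))"
    define w where "w = y * cis (- c)"
    define p where "p = Arg w"
    have "cmod w = 1" using y by (simp add: w_def norm_mult)
    moreover from this have "w \<noteq> 0" by auto
    ultimately have w: "w = cis p" by (simp add: p_def cis_Arg sgn_div_norm)
    have "cos h \<le> cos \<bar>p\<bar>" using y(2) by (simp add: w_def[symmetric] w)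
    moreover have "\<bar>p\<bar> \<le> pi" using Arg_bounded[of w] by (auto simp: p_def)
    ultimately have "\<bar>p\<bar> \<le> h" using cos_mono_le_eq[of h "\<bar>p\<bar>"] h by auto
    then have "c + p \<in> {a..b}"
      unfolding c_def h_def by (auto simp: abs_if field_simps split: if_splits)
    moreover have "y = w * cis c" by (simp add: w_def cis_mult)
    then have "y = cis (c + p)" by (simp add: w cis_mult add.commute)
    ultimately show "y \<in> cis ` {a..b}" by blast
  qed
qed

lemma cis_image_eq_cap_if_ends:
  assumes l0: "l \<noteq> 0" and l1: "cmod l < 1"
    and ab: "a \<le> b" "b - a < pi" and ends: "{cis a, cis b} = bisector_ends l"
  shows "cis ` {a..b} = {y. cmod y = 1 \<and> Re (y * cnj l) \<ge> (cmod l)^2}"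
proof -
  have "bisector_end l 1 + bisector_end l (-1) = 2 * l"
    using l0 by (simp add: bisector_end_def complex_eq_iff field_simps)
  moreover have "{cis a, cis b} = {bisector_end l 1, bisector_end l (-1)}"
    using ends bisector_ends_eq[OF l0 l1] by simp
  ultimately have sum: "cis a + cis b = 2 * l" by (auto simp: doubleton_eq_iff add.commute)
  have "(cmod (2 * l))^2 / 2 = 2 * (cmod l)^2" by (simp add: norm_mult power_mult_distrib)
  moreover have "\<And>y. Re (y * cnj (2 * l)) = 2 * Re (y * cnj l)" by simp
  moreover have "\<And>X. 2 * (cmod l)^2 \<le> 2 * X \<longleftrightarrow> (cmod l)^2 \<le> X" by simp
  ultimately show ?thesis
    unfolding cis_image_atLeastAtMost[OF ab] sum by (simp only:)
qed

lemma Iarc_eq_cap: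
  assumes l0: "l \<noteq> 0" and l1: "cmod l < 1"
  shows "Iarc l = {y. cmod y = 1 \<and> Re (y * cnj l) \<ge> (cmod l)^2}"
  unfolding Iarc_def
proof (rule the_equality)
  define \<alpha> where "\<alpha> = Arg l - arccos (cmod l)"
  define \<beta> where "\<beta> = Arg l + arccos (cmod l)"
  have ab: "\<alpha> \<le> \<beta>" "\<beta> - \<alpha> < pi"
    using arccos_gt_0_less_pi_half[of "cmod l"] l0 l1 by (auto simp: \<alpha>_def \<beta>_def)
  have ends: "{cis \<alpha>, cis \<beta>} = bisector_ends l"
    using cis_Arg_plus_minus_arccos[OF l0 l1] bisector_ends_eq[OF l0 l1]
    by (auto simp: \<alpha>_def \<beta>_def)
  show "\<exists>a b. a \<le> b \<and> b - a < pi \<and> {cis a, cis b} = bisector_ends l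
      \<and> {y. cmod y = 1 \<and> Re (y * cnj l) \<ge> (cmod l)^2} = cis ` {a..b}"
    using ab ends cis_image_eq_cap_if_ends[OF l0 l1 ab ends] by blast
qed (use cis_image_eq_cap_if_ends[OF l0 l1] in blast)

lemma Iarc_eq_cis_image:
  assumes l0: "l \<noteq> 0" and l1: "cmod l < 1"
  shows "Iarc l = cis ` {Arg l - arccos (cmod l) .. Arg l + arccos (cmod l)}"
proof -
  have "{cis (Arg l - arccos (cmod l)), cis (Arg l + arccos (cmod l))} = bisector_ends l"
    using cis_Arg_plus_minus_arccos[OF l0 l1] bisector_ends_eq[OF l0 l1] by auto
  then show ?thesis
    using cis_image_eq_cap_if_ends[OF l0 l1] Iarc_eq_cap[OF l0 l1]
      arccos_gt_0_less_pi_half[of "cmod l"] l0 l1 by simp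
qed

lemma cis_eq_cisE:
  assumes "cis t = cis s"
  obtains n :: int where "t = s + 2 * pi * of_int n"
proof -
  have "exp (\<i> * complex_of_real t) = exp (\<i> * complex_of_real s)"
    using assms by (simp add: cis_conv_exp)
  then obtain n :: int
    where "\<i> * complex_of_real t = \<i> * complex_of_real s + (of_int (2 * n) * pi) * \<i>"
    unfolding exp_eq by blast
  then have "Im (\<i> * complex_of_real t) = Im (\<i> * complex_of_real s + (of_int (2 * n) * pi) * \<i>)"
    by simp
  then show ?thesis using that by simp
qed

lemma cis_image_atLeastAtMost_shift:
  "cis ` {a + 2 * pi * of_int n .. b + 2 * pi * of_int n} = cis ` {a..b}"
proof -
  have "cis (x + 2 * pi * of_int n) = cis x" for x
    using cis_multiple_2pi[of "2 * pi * of_int n"] by (simp add: cis_mult[symmetric])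
  then show ?thesis
    by (simp only: image_add_atLeastAtMost'[symmetric] image_image add.commute)
qed

lemma cis_preimage_atLeastAtMost_subset:
  assumes a: "0 \<le> a" "a < 2 * pi" and ab: "a \<le> b" "b - a < 2 * pi"
  shows "{t \<in> {0..<2*pi}. cis t \<in> cis ` {a..b}} \<subseteq> {a..min b (2*pi)} \<union> {0..max 0 (b - 2*pi)}"
proof
  fix t assume "t \<in> {t \<in> {0..<2*pi}. cis t \<in> cis ` {a..b}}"
  then obtain s where t: "0 \<le> t" "t < 2 * pi" and s: "a \<le> s" "s \<le> b" and "cis t = cis s"
    by auto
  then obtain k :: int where k: "t = s + 2 * pi * of_int k" using cis_eq_cisE by blast
  have "2 * pi * of_int k < 2 * pi * 1" using k t s a by linarith
  then have "k < 1" by simp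
  have "2 * pi * (-2) < 2 * pi * of_int k" using k t s a ab by linarith
  then have "pi * (-2) < pi * of_int k" by simp
  then have "(-2::real) < of_int k" using mult_less_cancel_left_pos[OF pi_gt_zero] by blast
  then have "-2 < k" by simp
  with \<open>k < 1\<close> have "k = 0 \<or> k = -1" by linarith
  then show "t \<in> {a..min b (2*pi)} \<union> {0..max 0 (b - 2*pi)}" using k t s by auto
qed

lemma arc_len_cis_image_le:
  assumes ab: "a \<le> b" "b - a < 2 * pi"
  shows "arc_len (cis ` {a..b}) \<le> b - a"
proof -
  define n where "n = \<lfloor>a / (2 * pi)\<rfloor>"
  define a' where "a' = a - 2 * pi * of_int n"
  define b' where "b' = b - 2 * pi * of_int n"
  have "of_int n \<le> a / (2 * pi)" "a / (2 * pi) < of_int n + 1" unfolding n_def by linarith+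
  then have a': "0 \<le> a'" "a' < 2 * pi" unfolding a'_def by (auto simp: field_simps)
  have ab': "a' \<le> b'" "b' - a' < 2 * pi" "b' - a' = b - a" using ab by (auto simp: a'_def b'_def)
  have img: "cis ` {a..b} = cis ` {a'..b'}"
    using cis_image_atLeastAtMost_shift[of a' n b'] by (simp add: a'_def b'_def)
  define T where "T = {t \<in> {0..<2*pi}. cis t \<in> cis ` {a'..b'}}"
  define A where "A = {a'..min b' (2*pi)}"
  define B where "B = {0..max 0 (b' - 2*pi)}"
  have "T \<subseteq> A \<union> B"
    unfolding T_def A_def B_def by (rule cis_preimage_atLeastAtMost_subset[OF a' ab'(1,2)])
  have "measure lborel T \<le> measure lborel A + measure lborel B"
  proof (cases "T \<in> sets lborel")
    case True
    have "A \<union> B \<in> fmeasurable lborel"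
      unfolding A_def B_def by (intro fmeasurable.Un) (metis cbox_interval fmeasurable_cbox)+
    then have "measure lborel T \<le> measure lborel (A \<union> B)"
      using measure_mono_fmeasurable[OF \<open>T \<subseteq> A \<union> B\<close> True] by blast
    also have "\<dots> \<le> measure lborel A + measure lborel B"
      by (rule measure_Un_le) (simp_all add: A_def B_def)
    finally show ?thesis .
  qed (simp add: measure_notin_sets)
  also have "measure lborel A + measure lborel B = b' - a'"
    using a' ab' by (simp add: A_def B_def)
  finally show ?thesis unfolding arc_len_def img T_def[symmetric] using ab' by simp
qed

lemma arc_len_Iarc_le:
  assumes "l \<noteq> 0" "cmod l < 1"
  shows "arc_len (Iarc l) \<le> 2 * arccos (cmod l)"
  using arc_len_cis_image_le[of "Arg l - arccos (cmod l)" "Arg l + arccos (cmod l)"]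
    arccos_gt_0_less_pi_half[of "cmod l"] Iarc_eq_cis_image[OF assms] assms
  by simp

lemma norm_diff_le_of_mem_Iarc:
  assumes "l \<noteq> 0" "cmod l < 1" "y \<in> Iarc l"
  shows "cmod (y - l) \<le> sqrt (1 - (cmod l)^2)"
proof -
  have "cmod y = 1" "Re (y * cnj l) \<ge> (cmod l)^2" using assms Iarc_eq_cap[OF assms(1,2)] by auto
  then have "(cmod (y - l))^2 \<le> 1 - (cmod l)^2" using cmod_diff_power2[of y l] by simp
  then show ?thesis using real_le_rsqrt by blast
qed

lemma norm_diff_le_of_both_mem_Iarc:
  assumes "l \<noteq> 0" "cmod l < 1" "x \<in> Iarc l" "y \<in> Iarc l"
  shows "cmod (y - x) \<le> 2 * sqrt (1 - (cmod l)^2)"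
proof -
  have "cmod (y - x) \<le> cmod (y - l) + cmod (x - l)"
    using norm_triangle_ineq[of "y - l" "l - x"] by (simp add: norm_minus_commute)
  then show ?thesis
    using norm_diff_le_of_mem_Iarc[OF assms(1,2,3)] norm_diff_le_of_mem_Iarc[OF assms(1,2,4)]
    by linarith
qed

lemma bisector_end_mem_Iarc:
  assumes "l \<noteq> 0" "cmod l < 1"
  shows "bisector_end l 1 \<in> Iarc l" "Re (bisector_end l 1 * cnj l) = (cmod l)^2"
proof -
  have "bisector_end l 1 * cnj l
      = (l * cnj l) / complex_of_real (cmod l) * Complex (cmod l) (sqrt (1 - (cmod l)^2))"
    by (simp add: bisector_end_def)
  also have "\<dots> = complex_of_real (cmod l) * Complex (cmod l) (sqrt (1 - (cmod l)^2))"
    unfolding complex_norm_square[symmetric] using assms by (simp add: power2_eq_square)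
  finally show "Re (bisector_end l 1 * cnj l) = (cmod l)^2" by (simp add: power2_eq_square)
  then show "bisector_end l 1 \<in> Iarc l"
    using Iarc_eq_cap[OF assms] norm_bisector_end[OF assms, of 1] by simp
qed

text \<open>
  If \<open>x\<close> lies in \<open>I\<^sub>l\<close> with margin \<open>g = Re (x l\<^sup>*) - |l|\<^sup>2\<close>, then every arc through \<open>x\<close> of
  Euclidean radius below \<open>g / 2\<close> keeps that margin positive, so it misses the endpoints of \<open>I\<^sub>l\<close>.
\<close>
lemma Iarc_psubset:
  assumes l: "l \<noteq> 0" "cmod l < 1" and l': "l' \<noteq> 0" "cmod l' < 1"
    and x: "x \<in> Iarc l'" and small: "2 * sqrt (1 - (cmod l')^2) < Re (x * cnj l) - (cmod l)^2"
  shows "Iarc l' \<subset> Iarc l"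
proof -
  have inside: "Re (y * cnj l) > (cmod l)^2" if y: "y \<in> Iarc l'" for y
  proof -
    have yx: "cmod (y - x) < Re (x * cnj l) - (cmod l)^2"
      using norm_diff_le_of_both_mem_Iarc[OF l' x y] small by linarith
    have "- cmod ((y - x) * cnj l) \<le> Re ((y - x) * cnj l)"
      using abs_Re_le_cmod[of "(y - x) * cnj l"] by linarith
    moreover have "cmod ((y - x) * cnj l) \<le> cmod (y - x)"
      using l by (simp add: norm_mult mult_right_le_one_le)
    moreover have "Re (y * cnj l) = Re (x * cnj l) + Re ((y - x) * cnj l)"
      by (simp add: algebra_simps)
    ultimately show ?thesis using yx by linarith
  qed
  then have "Iarc l' \<subseteq> Iarc l" using Iarc_eq_cap[OF l] Iarc_eq_cap[OF l'] by fastforce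
  moreover have "bisector_end l 1 \<notin> Iarc l'"
    using inside bisector_end_mem_Iarc(2)[OF l] by fastforce
  ultimately show ?thesis using bisector_end_mem_Iarc(1)[OF l] by blast
qed

lemma orbit0_Iarc_psubset:
  assumes sub: "disk_subgroup G" and cc: "cocompact G" and x: "cmod x = 1"
    and l: "l \<in> orbit0 G" "Re (x * cnj l) > (cmod l)^2" and e: "e > 0"
  obtains l' where "l' \<in> orbit0 G" "Re (x * cnj l') > (cmod l')^2"
    "Iarc l' \<subset> Iarc l" "1 - (cmod l')^2 < e"
proof -
  define g where "g = Re (x * cnj l) - (cmod l)^2"
  have "g > 0" using l by (simp add: g_def)
  then have "0 < min e ((g / 2)^2)" using e by simp
  then obtain l' where l': "l' \<in> orbit0 G" "Re (x * cnj l') > (cmod l')^2"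
    and l'_small: "1 - (cmod l')^2 < min e ((g / 2)^2)"
    by (rule orbit0_near_boundary_point[OF sub cc x])
  have l_disk: "l \<noteq> 0" "cmod l < 1" using l orbit0_norm_less_1[OF sub] by auto
  have l'_disk: "l' \<noteq> 0" "cmod l' < 1" using l' orbit0_norm_less_1[OF sub] by auto
  have "x \<in> Iarc l'" using Iarc_eq_cap[OF l'_disk] x l'(2) by simp
  moreover have "sqrt (1 - (cmod l')^2) < sqrt ((g / 2)^2)"
    using l'_small by (intro real_sqrt_less_mono) simp
  then have "2 * sqrt (1 - (cmod l')^2) < Re (x * cnj l) - (cmod l)^2"
    using \<open>g > 0\<close> by (simp add: g_def)
  ultimately have "Iarc l' \<subset> Iarc l" by (rule Iarc_psubset[OF l_disk l'_disk])
  then show ?thesis using that l' l'_small by simp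
qed

lemma Inter_Iarc_eq_singleton:
  assumes L: "\<And>n. L n \<noteq> 0" "\<And>n. cmod (L n) < 1" and x: "\<And>n. x \<in> Iarc (L n)"
    and small: "\<And>n. 1 - (cmod (L n))^2 < (1 / real (Suc n))^2"
  shows "(\<Inter>n. Iarc (L n)) = {x}"
proof -
  have "y = x" if y: "\<And>n. y \<in> Iarc (L n)" for y
  proof (rule ccontr)
    assume "y \<noteq> x"
    then obtain n where n: "inverse (real (Suc n)) < cmod (y - x) / 2"
      using reals_Archimedean[of "cmod (y - x) / 2"] by auto
    have "sqrt (1 - (cmod (L n))^2) < sqrt ((1 / real (Suc n))^2)"
      using small by (rule real_sqrt_less_mono)
    then have "cmod (y - x) < 2 / real (Suc n)"
      using norm_diff_le_of_both_mem_Iarc[OF L x y, of n] by simp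
    then show False using n by (simp add: field_simps)
  qed
  then show ?thesis using x by blast
qed

lemma Iarc_nested_sequence:
  assumes sub: "disk_subgroup G" and cc: "cocompact G" and x: "cmod x = 1"
  obtains L :: "nat \<Rightarrow> complex" where "\<forall>k. L k \<in> orbit0 G - {0}"
    "\<forall>k. Iarc (L (Suc k)) \<subset> Iarc (L k)" "(\<Inter>k. Iarc (L k)) = {x}"
proof -
  define P where "P = (\<lambda>n l. l \<in> orbit0 G \<and> Re (x * cnj l) > (cmod l)^2
    \<and> 1 - (cmod l)^2 < (1 / real (Suc n))^2)"
  have "\<exists>l. P 0 l"
  proof -
    obtain l where "l \<in> orbit0 G" "Re (x * cnj l) > (cmod l)^2" "1 - (cmod l)^2 < 1"
      using orbit0_near_boundary_point[OF sub cc x zero_less_one] .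
    then show ?thesis unfolding P_def by auto
  qed
  moreover have "\<exists>l'. P (Suc n) l' \<and> Iarc l' \<subset> Iarc l" if Pn: "P n l" for n l
  proof -
    have l: "l \<in> orbit0 G" "Re (x * cnj l) > (cmod l)^2" using Pn by (simp_all add: P_def)
    have "0 < (1 / real (Suc (Suc n)))^2" by simp
    then obtain l' where "l' \<in> orbit0 G" "Re (x * cnj l') > (cmod l')^2"
      "Iarc l' \<subset> Iarc l" "1 - (cmod l')^2 < (1 / real (Suc (Suc n)))^2"
      by (rule orbit0_Iarc_psubset[OF sub cc x l])
    then show ?thesis unfolding P_def by blast
  qed
  ultimately obtain L where L: "\<And>n. P n (L n)" "\<And>n. Iarc (L (Suc n)) \<subset> Iarc (L n)"
    using dependent_nat_choice[of P "\<lambda>_ l l'. Iarc l' \<subset> Iarc l"] by metis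
  have L_disk: "L n \<noteq> 0" "cmod (L n) < 1" for n
    using L(1)[of n] orbit0_norm_less_1[OF sub] by (auto simp: P_def)
  have "x \<in> Iarc (L n)" for n
    using L(1)[of n] Iarc_eq_cap[OF L_disk] x by (simp add: P_def)
  then have "(\<Inter>k. Iarc (L k)) = {x}"
    using Inter_Iarc_eq_singleton[OF L_disk] L(1) by (simp add: P_def)
  moreover have "\<forall>k. L k \<in> orbit0 G - {0}" using L(1) L_disk by (simp add: P_def)
  ultimately show ?thesis using that L(2) by blast
qed

lemma orbit0_short_Iarc:
  assumes sub: "disk_subgroup G" and cc: "cocompact G" and y: "cmod y = 1" and \<epsilon>: "\<epsilon> > 0"
  obtains l where "l \<in> orbit0 G - {0}" "Re (y * cnj l) > (cmod l)^2" "arc_len (Iarc l) \<le> \<epsilon>"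
proof -
  define e where "e = min (\<epsilon> / 2) 1"
  have "e \<le> 1" unfolding e_def by (rule min.cobounded2)
  then have e: "0 < e" "e \<le> \<epsilon> / 2" "e < pi / 2"
    using \<epsilon> pi_gt3 by (simp_all add: e_def)
  have "cos e < cos 0" using e by (intro cos_monotone_0_pi) simp_all
  then have cos_e: "0 < cos e" "cos e < 1" using e by (simp_all add: cos_gt_zero_pi)
  then have "0 < 1 - (cos e)^2" by (simp add: abs_square_less_1)
  then obtain l where l: "l \<in> orbit0 G" "Re (y * cnj l) > (cmod l)^2" "1 - (cmod l)^2 < 1 - (cos e)^2"
    by (rule orbit0_near_boundary_point[OF sub cc y])
  have l_disk: "l \<noteq> 0" "cmod l < 1" using l orbit0_norm_less_1[OF sub] by auto
  have "(cos e)^2 < (cmod l)^2" using l(3) by simp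
  then have "cos e < cmod l" by (rule power2_less_imp_less[OF _ norm_ge_zero])
  then have "arccos (cmod l) \<le> arccos (cos e)"
    using cos_e l_disk by (intro arccos_le_arccos) simp_all
  also have "arccos (cos e) = e" using e by (intro arccos_cos) simp_all
  finally have "arc_len (Iarc l) \<le> \<epsilon>" using arc_len_Iarc_le[OF l_disk] e by simp
  then show ?thesis using that l l_disk by simp
qed

lemma Iarc_finite_cover:
  assumes sub: "disk_subgroup G" and cc: "cocompact G" and \<epsilon>: "\<epsilon> > 0"
  obtains F where "finite F" "F \<subseteq> Iarc ` (orbit0 G - {0})" "sphere 0 1 \<subseteq> \<Union>F"
    "\<forall>I\<in>F. arc_len I \<le> \<epsilon>"
proof -
  have "\<exists>l. l \<in> orbit0 G - {0} \<and> Re (y * cnj l) > (cmod l)^2 \<and> arc_len (Iarc l) \<le> \<epsilon>"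
    if "y \<in> sphere 0 1" for y
  proof -
    have "cmod y = 1" using that by simp
    then obtain l where "l \<in> orbit0 G - {0}" "Re (y * cnj l) > (cmod l)^2" "arc_len (Iarc l) \<le> \<epsilon>"
      by (rule orbit0_short_Iarc[OF sub cc _ \<epsilon>])
    then show ?thesis by blast
  qed
  then obtain L where L: "\<forall>y\<in>sphere 0 1. L y \<in> orbit0 G - {0}
      \<and> Re (y * cnj (L y)) > (cmod (L y))^2 \<and> arc_len (Iarc (L y)) \<le> \<epsilon>"
    by (rule bchoice[rule_format, THEN exE]) blast
  define U where "U = (\<lambda>y. {z. Re (z * cnj (L y)) > (cmod (L y))^2})"
  have "\<And>y. y \<in> sphere 0 1 \<Longrightarrow> open (U y)"
    unfolding U_def by (intro open_Collect_less continuous_intros)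
  moreover have "sphere 0 1 \<subseteq> (\<Union>y\<in>sphere 0 1. U y)" using L by (auto simp: U_def)
  ultimately obtain C where C: "C \<subseteq> sphere 0 1" "finite C" "sphere 0 1 \<subseteq> (\<Union>y\<in>C. U y)"
    by (rule compactE_image[OF compact_sphere])
  have "z \<in> Iarc (L y)" if "y \<in> C" "z \<in> sphere 0 1" "z \<in> U y" for y z
  proof -
    have "L y \<in> orbit0 G - {0}" using L that(1) C(1) by blast
    then have "L y \<noteq> 0" "cmod (L y) < 1" using orbit0_norm_less_1[OF sub] by auto
    then show ?thesis using Iarc_eq_cap[of "L y"] that by (simp add: U_def)
  qed
  then have "sphere 0 1 \<subseteq> \<Union>((\<lambda>y. Iarc (L y)) ` C)" using C(3) by blast
  moreover have "(\<lambda>y. Iarc (L y)) ` C \<subseteq> Iarc ` (orbit0 G - {0})" using C(1) L by blast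
  moreover have "\<forall>I\<in>(\<lambda>y. Iarc (L y)) ` C. arc_len I \<le> \<epsilon>" using C(1) L by blast
  moreover have "finite ((\<lambda>y. Iarc (L y)) ` C)" using C(2) by simp
  ultimately show ?thesis using that[of "(\<lambda>y. Iarc (L y)) ` C"] by blast
qed

theorem lemma8:
  fixes \<Gamma> :: "(complex \<times> complex) set"
  assumes "fuchsian \<Gamma>" and "cocompact \<Gamma>" and "torsion_free \<Gamma>"
  shows "(\<forall>x\<in>sphere 0 1. \<exists>l :: nat \<Rightarrow> complex.
            (\<forall>k. l k \<in> orbit0 \<Gamma> - {0}) \<and>
            (\<forall>k. Iarc (l (Suc k)) \<subset> Iarc (l k)) \<and>
            (\<Inter>k. Iarc (l k)) = {x})
       \<and> (\<forall>J \<epsilon>. circle_interval J \<and> \<epsilon> > 0 \<longrightarrow>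
            (\<exists>F. finite F \<and> F \<subseteq> Iarc ` (orbit0 \<Gamma> - {0}) \<and> J \<subseteq> \<Union>F \<and>
                 (\<forall>I\<in>F. arc_len I \<le> \<epsilon>)))"
proof -
  have sub: "disk_subgroup \<Gamma>" using assms(1) by (simp add: fuchsian_def)
  show ?thesis
  proof (intro conjI ballI allI impI)
    fix x :: complex assume "x \<in> sphere 0 1"
    then have "cmod x = 1" by simp
    then obtain l where "\<forall>k. l k \<in> orbit0 \<Gamma> - {0}" "\<forall>k. Iarc (l (Suc k)) \<subset> Iarc (l k)"
      "(\<Inter>k. Iarc (l k)) = {x}"
      by (rule Iarc_nested_sequence[OF sub assms(2)])
    then show "\<exists>l. (\<forall>k. l k \<in> orbit0 \<Gamma> - {0}) \<and> (\<forall>k. Iarc (l (Suc k)) \<subset> Iarc (l k))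
        \<and> (\<Inter>k. Iarc (l k)) = {x}"
      by (intro exI[of _ l] conjI)
  next
    fix J and \<epsilon> :: real assume J: "circle_interval J \<and> \<epsilon> > 0"
    then obtain F where F: "finite F" "F \<subseteq> Iarc ` (orbit0 \<Gamma> - {0})" "sphere 0 1 \<subseteq> \<Union>F"
      "\<forall>I\<in>F. arc_len I \<le> \<epsilon>"
      using Iarc_finite_cover[OF sub assms(2), of \<epsilon>] by auto
    have "J \<subseteq> sphere 0 1" using J unfolding circle_interval_def by auto
    then show "\<exists>F. finite F \<and> F \<subseteq> Iarc ` (orbit0 \<Gamma> - {0}) \<and> J \<subseteq> \<Union>F
        \<and> (\<forall>I\<in>F. arc_len I \<le> \<epsilon>)"
      using F by (intro exI[of _ F] conjI) auto
  qed
qed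

end
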